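(* Let $r>1$ and let $f$ be a real analytic function on $\{|z|<r\}$ (real Taylor coefficients) with $f(0)>0$ whose zeros in the closed unit disk are all real and simple; let $z_1,\dots,z_M$ be its zeros in $|z|<1$ and let $s$ be the number of indices $j$ for which the canonical weight $\frac{(z_j-1/z_j)^2}{z_jf'(z_j)f(1/z_j)}$ is negative. Then there is a polynomial $\tilde g$ of degree at most $2s$, all of whose roots are real with modulus greater than $1$, such that the canonical weights of $f\tilde g$ at all its zeros in the open unit disk, $\frac{(z_j-1/z_j)^2}{z_j(f\tilde g)'(z_j)(f\tilde g)(1/z_j)}$, are positive. *)

theory Defs
  imports "HOL-Analysis.Analysis" "HOL-Computational_Algebra.Polynomial"
begin

definition canonical_weight :: "(complex \<Rightarrow> complex) \<Rightarrow> complex \<Rightarrow> complex" where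
  "canonical_weight F z = (z - 1 / z)\<^sup>2 / (z * deriv F z * F (1 / z))"

end

theory Submission
  imports Defs "HOL-Complex_Analysis.Complex_Analysis"
begin

(*
  All zeros z of f in the open unit disk are real, non-zero and simple,
  and f has real Taylor coefficients, so every canonical weight of f at such a zero is a
  non-zero real number.  For a polynomial G without zeros near the unit disk,
    canonical_weight (f * G) z = canonical_weight f z / (G z * G (1/z)),
  so multiplying by G rescales the weight at z by the sign of G z * G (1/z).  For every
  zero z with negative weight we put the two roots 1/z - d and 1/z + d into G, where d is
  smaller than the distance from the unit disk to the points 1/z and than all their
  mutual distances.  Then G is positive on the unit interval and at every reciprocal
  1/z except at those of the "negative" zeros, where exactly one factor is negative.
*)

text \<open>A holomorphic function whose Taylor coefficients at a real centre are real takes real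
  values at real points of its disk of holomorphy: its Taylor series converges there and
  all its terms are real.\<close>
lemma holomorphic_real_on_reals:
  assumes holo: "h holomorphic_on ball c r" and c: "c \<in> \<real>"
    and coeffs: "\<forall>n. (deriv ^^ n) h c \<in> \<real>"
    and x: "x \<in> \<real>" "x \<in> ball c r"
  shows "h x \<in> \<real>"
proof -
  have series: "(\<lambda>n. (deriv ^^ n) h c / fact n * (x - c) ^ n) sums h x"
    by (rule holomorphic_power_series[OF holo x(2)])
  have real_terms: "(deriv ^^ n) h c / fact n * (x - c) ^ n \<in> \<real>" for n
  proof -
    have "(fact n :: complex) \<in> \<real>"
      by (metis Reals_of_nat of_nat_fact)
    then show ?thesis
      using coeffs c x(1) by (intro Reals_mult Reals_divide Reals_power Reals_diff) auto
  qed
  have "(\<lambda>n. Im ((deriv ^^ n) h c / fact n * (x - c) ^ n)) sums Im (h x)"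
    using sums_Im[OF series] .
  moreover have "Im ((deriv ^^ n) h c / fact n * (x - c) ^ n) = 0" for n
    using real_terms by (simp add: complex_is_Real_iff)
  ultimately have "Im (h x) = 0"
    by (simp add: sums_iff)
  then show ?thesis
    by (simp add: complex_is_Real_iff)
qed

lemma deriv_real_coeffs:
  assumes "\<forall>n. (deriv ^^ n) h c \<in> \<real>"
  shows "\<forall>n. (deriv ^^ n) (deriv h) c \<in> \<real>"
proof
  fix n
  have "(deriv ^^ n) (deriv h) = (deriv ^^ Suc n) h"
    by (simp add: funpow_Suc_right del: funpow.simps)
  then show "(deriv ^^ n) (deriv h) c \<in> \<real>"
    using assms by metis
qed

lemma finite_zeros_in_compact:
  assumes "h holomorphic_on S" "open S" "connected S" "compact K" "K \<subseteq> S"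
    and w: "w \<in> S" "h w \<noteq> 0"
  shows "finite {z\<in>K. h z = 0}"
proof (cases "h constant_on S")
  case True
  then have "h z = h w" if "z \<in> S" for z
    using w(1) that by (auto simp: constant_on_def)
  then have "{z\<in>K. h z = 0} = {}"
    using w(2) \<open>K \<subseteq> S\<close> by auto
  then show ?thesis
    by (metis finite.emptyI)
next
  case False
  then show ?thesis
    by (rule holomorphic_compact_finite_zeros[OF assms(1-5)])
qed

text \<open>Multiplying by a function G changes the canonical weight at a zero z by the factor
  1 / (G z * G (1/z)); this is the only way the auxiliary polynomial enters.\<close>
lemma canonical_weight_mult:
  assumes "F field_differentiable at z" "G field_differentiable at z" "F z = 0"
  shows "canonical_weight (\<lambda>w. F w * G w) z = canonical_weight F z / (G z * G (1 / z))"
  using assms by (simp add: canonical_weight_def deriv_mult mult_ac)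

lemma canonical_weight_real_nonzero:
  assumes z: "z \<in> \<real>" "z \<noteq> 0" "cmod z \<noteq> 1"
    and dF: "deriv F z \<in> \<real>" "deriv F z \<noteq> 0"
    and Finv: "F (1 / z) \<in> \<real>" "F (1 / z) \<noteq> 0"
  shows "canonical_weight F z \<in> \<real>" "canonical_weight F z \<noteq> 0"
proof -
  have "z - 1 / z \<noteq> 0"
  proof
    assume "z - 1 / z = 0"
    then have "z * z = 1"
      using z(2) by (simp add: field_simps)
    then have "cmod z ^ 2 = 1"
      by (metis norm_mult norm_one power2_eq_square)
    then show False
      using z(3) norm_ge_zero[of z] by (auto simp: power2_eq_1_iff)
  qed
  then show "canonical_weight F z \<noteq> 0"
    using z dF Finv by (simp add: canonical_weight_def)
  show "canonical_weight F z \<in> \<real>"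
    unfolding canonical_weight_def using z dF Finv
    by (intro Reals_divide Reals_mult Reals_power Reals_diff) auto
qed

lemma canonical_weight_at_real_zero:
  assumes holo: "f holomorphic_on ball 0 r" and coeffs: "\<forall>n. (deriv ^^ n) f 0 \<in> \<real>"
    and z: "z \<in> \<real>" "z \<noteq> 0" "cmod z < 1" "z \<in> ball 0 r" "1 / z \<in> ball 0 r"
    and simple: "deriv f z \<noteq> 0" and reflected: "f (1 / z) \<noteq> 0"
  shows "canonical_weight f z \<in> \<real> \<and> canonical_weight f z \<noteq> 0"
proof -
  have "deriv f holomorphic_on ball 0 r"
    by (rule holomorphic_deriv[OF holo open_ball])
  then have "deriv f z \<in> \<real>"
    by (rule holomorphic_real_on_reals[OF _ Reals_0 deriv_real_coeffs[OF coeffs] z(1,4)])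
  moreover have "f (1 / z) \<in> \<real>"
    using z(1) by (intro holomorphic_real_on_reals[OF holo Reals_0 coeffs _ z(5)]) simp
  moreover have "cmod z \<noteq> 1"
    using z(3) by simp
  ultimately show ?thesis
    using canonical_weight_real_nonzero[of z f] z(1,2) simple reflected by blast
qed

lemma map_poly_of_real_mult:
  "map_poly complex_of_real (p * q) = map_poly of_real p * map_poly of_real q"
  by (rule poly_eqI) (simp add: coeff_mult coeff_map_poly)

lemma map_poly_of_real_prod:
  "finite A \<Longrightarrow> map_poly complex_of_real (\<Prod>x\<in>A. p x) = (\<Prod>x\<in>A. map_poly of_real (p x))"
  by (induction A rule: finite_induct) (simp_all add: map_poly_of_real_mult)

lemma poly_map_of_real_of_real:
  "poly (map_poly complex_of_real p) (of_real u) = of_real (poly p u)"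
  by (induction p) (auto simp: map_poly_pCons)

lemma canonical_weight_mult_poly_pos:
  fixes g :: "real poly" and u c :: real
  assumes F: "F field_differentiable at (of_real u)" "F (of_real u) = 0"
    and weight: "canonical_weight F (of_real u) = of_real c" "c \<noteq> 0"
    and at_zero: "poly g u > 0" and at_reciprocal: "sgn (poly g (1 / u)) = sgn c"
  shows "canonical_weight (\<lambda>w. F w * poly (map_poly complex_of_real g) w) (of_real u) \<in> \<real>
       \<and> Re (canonical_weight (\<lambda>w. F w * poly (map_poly complex_of_real g) w) (of_real u)) > 0"
proof -
  have "canonical_weight (\<lambda>w. F w * poly (map_poly complex_of_real g) w) (of_real u)
      = canonical_weight F (of_real u) /
          (poly (map_poly complex_of_real g) (of_real u) * poly (map_poly complex_of_real g) (1 / of_real u))"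
    using F by (intro canonical_weight_mult) (auto simp: field_differentiable_def intro: poly_DERIV)
  also have "\<dots> = of_real (c / (poly g u * poly g (1 / u)))"
    by (simp add: weight(1) flip: poly_map_of_real_of_real)
  finally have eq: "canonical_weight (\<lambda>w. F w * poly (map_poly complex_of_real g) w) (of_real u)
      = of_real (c / (poly g u * poly g (1 / u)))" .
  have "c / (poly g u * poly g (1 / u)) > 0"
  proof (cases "c > 0")
    case True
    then have "poly g (1 / u) > 0"
      using at_reciprocal by (auto simp: sgn_if split: if_splits)
    then show ?thesis
      using True at_zero by simp
  next
    case False
    then have "c < 0" "poly g (1 / u) < 0"
      using weight(2) at_reciprocal by (auto simp: sgn_if split: if_splits)
    then show ?thesis
      using at_zero by (simp add: divide_neg_neg mult_pos_neg)
  qed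
  then show ?thesis
    unfolding eq by simp
qed

section \<open>The flip polynomial\<close>

definition flip_poly :: "real set \<Rightarrow> real \<Rightarrow> real poly" where
  "flip_poly C d = (\<Prod>a\<in>C. [:a\<^sup>2 - d\<^sup>2, -2 * a, 1:])"

lemma poly_flip_poly: "poly (flip_poly C d) x = (\<Prod>a\<in>C. (x - a)\<^sup>2 - d\<^sup>2)"
  by (simp add: flip_poly_def poly_prod power2_eq_square algebra_simps)

lemma poly_flip_poly_complex:
  assumes "finite C"
  shows "poly (map_poly complex_of_real (flip_poly C d)) x = (\<Prod>a\<in>C. (x - of_real a)\<^sup>2 - (of_real d)\<^sup>2)"
  unfolding flip_poly_def map_poly_of_real_prod[OF assms] poly_prod
  by (intro prod.cong) (simp_all add: map_poly_pCons power2_eq_square algebra_simps)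

lemma degree_flip_poly:
  assumes "finite C"
  shows "degree (flip_poly C d) \<le> 2 * card C"
proof -
  have "degree (flip_poly C d) \<le> sum (degree \<circ> (\<lambda>a. [:a\<^sup>2 - d\<^sup>2, -2 * a, 1:])) C"
    unfolding flip_poly_def by (rule degree_prod_sum_le[OF assms])
  also have "\<dots> = 2 * card C"
    by simp
  finally show ?thesis .
qed

lemma square_minus_square_pos:
  fixes y d :: real
  assumes "d < \<bar>y\<bar>" "0 \<le> d"
  shows "y\<^sup>2 - d\<^sup>2 > 0"
proof -
  have "d\<^sup>2 < \<bar>y\<bar>\<^sup>2"
    using assms by (intro power_strict_mono) auto
  then show ?thesis
    by simp
qed

lemma flip_poly_pos:
  assumes "d \<ge> 0" "\<forall>a\<in>C. d < \<bar>x - a\<bar>"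
  shows "poly (flip_poly C d) x > 0"
  unfolding poly_flip_poly using assms by (intro prod_pos square_minus_square_pos) auto

lemma flip_poly_neg_at_centre:
  assumes "finite C" "a \<in> C" "d > 0" "\<forall>b\<in>C - {a}. d < \<bar>a - b\<bar>"
  shows "poly (flip_poly C d) a < 0"
proof -
  have "poly (flip_poly C d) a = ((a - a)\<^sup>2 - d\<^sup>2) * poly (flip_poly (C - {a}) d) a"
    unfolding poly_flip_poly using prod.remove[OF assms(1,2)] .
  moreover have "poly (flip_poly (C - {a}) d) a > 0"
    using assms(3,4) by (intro flip_poly_pos) auto
  ultimately show ?thesis
    using assms(3) by (simp add: mult_neg_pos)
qed

lemma flip_poly_roots:
  assumes "finite C" "d \<ge> 0" "\<forall>a\<in>C. 1 + d < \<bar>a\<bar>"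
    and root: "poly (map_poly complex_of_real (flip_poly C d)) x = 0"
  shows "x \<in> \<real> \<and> cmod x > 1"
proof -
  obtain a where a: "a \<in> C" and "(x - of_real a)\<^sup>2 - (of_real d)\<^sup>2 = 0"
    using root by (auto simp: poly_flip_poly_complex[OF assms(1)] prod_zero_iff[OF assms(1)])
  then have "x - of_real a = of_real d \<or> x - of_real a = - of_real d"
    by (simp add: power2_eq_iff)
  then have x: "x = of_real (a + d) \<or> x = of_real (a - d)"
    by (auto simp: algebra_simps)
  have "1 < \<bar>a + d\<bar>" "1 < \<bar>a - d\<bar>"
    using assms(2,3) a by fastforce+
  then show ?thesis
    using x by (auto simp del: of_real_add of_real_diff)
qed

lemma flip_poly_sign_on_separated:
  assumes R: "finite R" "C \<subseteq> R" "a \<in> R" and d: "d > 0"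
    and separated: "\<forall>p\<in>R. \<forall>q\<in>R. p \<noteq> q \<longrightarrow> d < \<bar>p - q\<bar>"
  shows "sgn (poly (flip_poly C d) a) = (if a \<in> C then -1 else 1)"
proof -
  have far: "\<forall>b\<in>C - {a}. d < \<bar>a - b\<bar>"
    using separated R(2,3) by (auto simp: subset_iff)
  show ?thesis
  proof (cases "a \<in> C")
    case True
    have "poly (flip_poly C d) a < 0"
      by (rule flip_poly_neg_at_centre[OF finite_subset[OF R(2,1)] True d far])
    then show ?thesis
      using True by simp
  next
    case False
    have "poly (flip_poly C d) a > 0"
      using far False d by (intro flip_poly_pos) auto
    then show ?thesis
      using False by simp
  qed
qed

text \<open>Each of these finitely many conditions holds for all sufficiently small d.\<close>
lemma finite_separation_radius:
  fixes S :: "'a::real_normed_vector set"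
  assumes "finite S" "\<forall>p\<in>S. 1 < norm p"
  shows "\<exists>d>0. (\<forall>p\<in>S. 1 + d < norm p) \<and> (\<forall>p\<in>S. \<forall>q\<in>S. p \<noteq> q \<longrightarrow> d < norm (p - q))"
proof -
  have small: "eventually (\<lambda>d. d < c) (at_right (0::real))" if "c > 0" for c
    using that by (auto simp: eventually_at_right_field)
  have "eventually (\<lambda>d. \<forall>p\<in>S. d < norm p - 1) (at_right 0)"
    using assms by (intro eventually_ball_finite ballI small) auto
  moreover have "eventually (\<lambda>d. \<forall>pq\<in>{pq\<in>S \<times> S. fst pq \<noteq> snd pq}. d < norm (fst pq - snd pq)) (at_right 0)"
    using assms(1) by (intro eventually_ball_finite ballI small) auto
  moreover have "eventually (\<lambda>d. d > 0) (at_right (0::real))"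
    by (rule eventually_at_right_less)
  ultimately have "eventually (\<lambda>d. d > 0 \<and> (\<forall>p\<in>S. 1 + d < norm p) \<and>
                     (\<forall>p\<in>S. \<forall>q\<in>S. p \<noteq> q \<longrightarrow> d < norm (p - q))) (at_right 0)"
    by eventually_elim auto
  then show ?thesis
    using eventually_happens'[OF trivial_limit_at_right_real] by blast
qed

text \<open>Writing inv z for the real
  number 1/z, we have g(z) > 0, and g(inv z) < 0 exactly when the weight at z is negative,
  so canonical_weight_mult_poly_pos applies at every zero.\<close>
lemma flip_negative_weights:
  fixes F :: "complex \<Rightarrow> complex" and Z :: "complex set"
  assumes finZ: "finite Z"
    and zeros: "\<And>z. z \<in> Z \<Longrightarrow> z \<in> \<real> \<and> z \<noteq> 0 \<and> cmod z < 1 \<and> F z = 0 \<and> F field_differentiable at z"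
    and weights: "\<And>z. z \<in> Z \<Longrightarrow> canonical_weight F z \<in> \<real> \<and> canonical_weight F z \<noteq> 0"
  shows "\<exists>g :: real poly. degree g \<le> 2 * card {z\<in>Z. Re (canonical_weight F z) < 0}
           \<and> (\<forall>x. poly (map_poly complex_of_real g) x = 0 \<longrightarrow> x \<in> \<real> \<and> cmod x > 1)
           \<and> (\<forall>z\<in>Z. canonical_weight (\<lambda>w. F w * poly (map_poly complex_of_real g) w) z \<in> \<real>
                  \<and> Re (canonical_weight (\<lambda>w. F w * poly (map_poly complex_of_real g) w) z) > 0)"
proof -
  define N where "N = {z\<in>Z. Re (canonical_weight F z) < 0}"
  define inv where "inv z = 1 / Re z" for z :: complex
  have inv: "of_real (inv z) = 1 / z" "1 < \<bar>inv z\<bar>" if "z \<in> Z" for z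
  proof -
    have z: "z \<in> \<real>" "z \<noteq> 0" "cmod z < 1"
      using zeros[OF that] by auto
    then show "of_real (inv z) = 1 / z"
      unfolding inv_def by simp
    then have "\<bar>inv z\<bar> = 1 / cmod z"
      by (metis norm_divide norm_of_real norm_one)
    then show "1 < \<bar>inv z\<bar>"
      using z by simp
  qed
  have inj: "inj_on inv Z"
    by (rule inj_onI) (metis inv(1) divide_cancel_left one_neq_zero)
  obtain d where d: "d > 0" "\<forall>p\<in>inv ` Z. 1 + d < \<bar>p\<bar>"
      "\<forall>p\<in>inv ` Z. \<forall>q\<in>inv ` Z. p \<noteq> q \<longrightarrow> d < \<bar>p - q\<bar>"
    using finite_separation_radius[of "inv ` Z"] finZ inv(2) by auto
  define g where "g = flip_poly (inv ` N) d"
  have finN: "finite N" and NZ: "N \<subseteq> Z"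
    using finZ by (auto simp: N_def)
  have "degree g \<le> 2 * card (inv ` N)"
    unfolding g_def using finN by (intro degree_flip_poly) auto
  also have "\<dots> \<le> 2 * card N"
    by (simp add: card_image_le finN)
  finally have deg: "degree g \<le> 2 * card N" .
  have roots: "x \<in> \<real> \<and> cmod x > 1" if "poly (map_poly complex_of_real g) x = 0" for x
    using that d NZ finN unfolding g_def by (intro flip_poly_roots) auto
  have positive: "canonical_weight (\<lambda>w. F w * poly (map_poly complex_of_real g) w) z \<in> \<real>
      \<and> Re (canonical_weight (\<lambda>w. F w * poly (map_poly complex_of_real g) w) z) > 0"
    if zZ: "z \<in> Z" for z
  proof -
    define u where "u = Re z"
    define c where "c = Re (canonical_weight F z)"
    have z: "of_real u = z" "\<bar>u\<bar> < 1" "inv z = 1 / u"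
      using zeros[OF zZ] abs_Re_le_cmod[of z] by (auto simp: u_def inv_def)
    have c: "of_real c = canonical_weight F z" "c \<noteq> 0" "sgn c = (if z \<in> N then -1 else 1)"
      using weights[OF zZ] zZ by (auto simp: c_def N_def complex_eq_iff complex_is_Real_iff sgn_if)
    have at_zero: "poly g u > 0"
      unfolding g_def using d NZ z(2) by (intro flip_poly_pos) fastforce+
    have "sgn (poly g (inv z)) = (if inv z \<in> inv ` N then -1 else 1)"
      unfolding g_def using finZ NZ d(1,3) zZ
      by (intro flip_poly_sign_on_separated[where R = "inv ` Z"]) auto
    then have at_reciprocal: "sgn (poly g (1 / u)) = sgn c"
      using inj_on_image_mem_iff[OF inj zZ NZ] z(3) c(3) by simp
    show ?thesis
      using canonical_weight_mult_poly_pos[of F u c g] zeros[OF zZ] z(1) c(1,2) at_zero at_reciprocal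
      by simp
  qed
  show ?thesis
    using deg roots positive unfolding N_def by blast
qed


lemma unit_disk_zeros:
  assumes r_gt: "r > 1" and holo: "f holomorphic_on ball 0 r"
    and real_coeffs: "\<forall>n. (deriv ^^ n) f 0 \<in> \<real>" and f0: "f 0 \<noteq> 0"
    and zeros_real_simple: "\<forall>z. cmod z \<le> 1 \<longrightarrow> f z = 0 \<longrightarrow> z \<in> \<real> \<and> deriv f z \<noteq> 0"
    and weights_defined: "\<forall>z. cmod z < 1 \<longrightarrow> f z = 0 \<longrightarrow> 1 / z \<in> ball 0 r \<and> f (1 / z) \<noteq> 0"
  defines "Z \<equiv> {z. cmod z < 1 \<and> f z = 0}"
  shows "finite Z"
    and "z \<in> Z \<Longrightarrow> z \<in> \<real> \<and> z \<noteq> 0 \<and> cmod z < 1 \<and> f z = 0 \<and> f field_differentiable at z"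
    and "z \<in> Z \<Longrightarrow> canonical_weight f z \<in> \<real> \<and> canonical_weight f z \<noteq> 0"
proof -
  have "finite {z\<in>cball 0 1. f z = 0}"
    using r_gt f0 by (intro finite_zeros_in_compact[OF holo, where w = 0]) auto
  then show "finite Z"
    by (rule finite_subset[rotated]) (auto simp: Z_def)
next
  assume "z \<in> Z"
  then have z: "cmod z < 1" "f z = 0" "z \<in> ball 0 r" "z \<noteq> 0"
    using r_gt f0 by (auto simp: Z_def)
  then show "z \<in> \<real> \<and> z \<noteq> 0 \<and> cmod z < 1 \<and> f z = 0 \<and> f field_differentiable at z"
    using zeros_real_simple holomorphic_on_imp_differentiable_at[OF holo open_ball] by auto
  show "canonical_weight f z \<in> \<real> \<and> canonical_weight f z \<noteq> 0"
    using z zeros_real_simple weights_defined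
    by (intro canonical_weight_at_real_zero[OF holo real_coeffs]) auto
qed

text \<open>Lemma 4.6: by unit_disk_zeros, flip_negative_weights applies to the zeros of f in the
  unit disk; the resulting polynomial has no zeros in the unit disk, hence f and f * g have
  the same zeros there.\<close>
theorem lemma4p6:
  fixes f :: "complex \<Rightarrow> complex" and r :: real
  assumes r_gt: "r > 1"
    and holo: "f holomorphic_on ball 0 r"
    and real_coeffs: "\<forall>n. (deriv ^^ n) f 0 \<in> \<real>"
    and f0_pos: "Re (f 0) > 0"
    and zeros_real_simple: "\<forall>z. cmod z \<le> 1 \<longrightarrow> f z = 0 \<longrightarrow> z \<in> \<real> \<and> deriv f z \<noteq> 0"
    and weights_defined: "\<forall>z. cmod z < 1 \<longrightarrow> f z = 0 \<longrightarrow> 1 / z \<in> ball 0 r \<and> f (1 / z) \<noteq> 0"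
  shows "\<exists>g :: real poly.
           degree g \<le> 2 * card {z. cmod z < 1 \<and> f z = 0 \<and>
                                  canonical_weight f z \<in> \<real> \<and> Re (canonical_weight f z) < 0}
         \<and> (\<forall>z. poly (map_poly complex_of_real g) z = 0 \<longrightarrow> z \<in> \<real> \<and> cmod z > 1)
         \<and> (\<forall>z. cmod z < 1 \<longrightarrow> f z * poly (map_poly complex_of_real g) z = 0 \<longrightarrow>
               canonical_weight (\<lambda>w. f w * poly (map_poly complex_of_real g) w) z \<in> \<real>
             \<and> Re (canonical_weight (\<lambda>w. f w * poly (map_poly complex_of_real g) w) z) > 0)"
proof -
  define Z where "Z = {z. cmod z < 1 \<and> f z = 0}"
  have f0: "f 0 \<noteq> 0"
    using f0_pos by auto
  note zeros = unit_disk_zeros[OF r_gt holo real_coeffs f0 zeros_real_simple weights_defined,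
      folded Z_def]
  obtain g :: "real poly" where deg: "degree g \<le> 2 * card {z\<in>Z. Re (canonical_weight f z) < 0}"
    and roots: "\<forall>x. poly (map_poly complex_of_real g) x = 0 \<longrightarrow> x \<in> \<real> \<and> cmod x > 1"
    and positive: "\<forall>z\<in>Z. canonical_weight (\<lambda>w. f w * poly (map_poly complex_of_real g) w) z \<in> \<real>
                  \<and> Re (canonical_weight (\<lambda>w. f w * poly (map_poly complex_of_real g) w) z) > 0"
    using flip_negative_weights[OF zeros] by blast
  have "{z\<in>Z. Re (canonical_weight f z) < 0} =
        {z. cmod z < 1 \<and> f z = 0 \<and> canonical_weight f z \<in> \<real> \<and> Re (canonical_weight f z) < 0}"
    using zeros(3) by (auto simp: Z_def)
  moreover have "z \<in> Z" if "cmod z < 1" "f z * poly (map_poly complex_of_real g) z = 0" for z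
    using that roots by (auto simp: Z_def)
  ultimately show ?thesis
    using deg roots positive by auto
qed

end
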